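(* Let $t \ge 2$ and let $q$ be a prime power. There do not exist vertices $a_1, b_1, \dots, a_{t+2}, b_{t+2}$ of $G(t,q)$ (not necessarily distinct) such that $a_i b_j \in E(G(t,q))$ for all $1 \le i < j \le t+2$ and $a_i b_i \notin E(G(t,q))$ for all $i \in [t+2]$.
   Context: $PG(t,q)$ denotes the projective space of dimension $t$ over $\mathbb{F}_q$: its points are the equivalence classes of nonzero vectors in $\mathbb{F}_q^{t+1}$ under the relation identifying a vector with its nonzero scalar multiples. $G(t,q)$ is the graph (possibly with loops) with vertex set $PG(t,q)$ in which two (not necessarily distinct) vertices represented by $\mathbf{x}, \mathbf{y}$ are adjacent if and only if $\langle \mathbf{x}, \mathbf{y}\rangle = \sum_{i=1}^{t+1} x_i y_i = 0$; in particular there is a loop at $\mathbf{x}$ iff $\langle \mathbf{x},\mathbf{x}\rangle = 0$, and $a_ia_i$ being an edge means a loop. *)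

theory Defs
  imports Main
begin

text \<open>Vectors of F_q^(t+1) are functions nat => 'a supported on coordinates 0..t.
  The finite field F_q is a type of class {finite, field}; every finite field has prime
  power order and every prime power occurs, so quantifying over such types is quantifying
  over prime powers q.\<close>

definition vecs :: "nat \<Rightarrow> (nat \<Rightarrow> 'a::field) set" where
  "vecs t = {x. \<forall>i>t. x i = 0}"

definition ip :: "nat \<Rightarrow> (nat \<Rightarrow> 'a::field) \<Rightarrow> (nat \<Rightarrow> 'a) \<Rightarrow> 'a" where
  "ip t x y = (\<Sum>i\<le>t. x i * y i)"

definition proj_class :: "nat \<Rightarrow> (nat \<Rightarrow> 'a::field) \<Rightarrow> (nat \<Rightarrow> 'a) set" where
  "proj_class t x = {y. \<exists>c. c \<noteq> 0 \<and> y = (\<lambda>i. c * x i)}"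

definition PG :: "nat \<Rightarrow> ((nat \<Rightarrow> 'a::field) set) set" where
  "PG t = proj_class t ` (vecs t - {\<lambda>_. 0})"

text \<open>Adjacency in G(t,q) (loops allowed): representatives are orthogonal
  (well defined, independent of representatives).\<close>
definition G_adj :: "nat \<Rightarrow> (nat \<Rightarrow> 'a::field) set \<Rightarrow> (nat \<Rightarrow> 'a) set \<Rightarrow> bool" where
  "G_adj t P Q = (\<exists>x\<in>P. \<exists>y\<in>Q. ip t x y = 0)"

end

theory Submission
  imports Defs "HOL-Library.FuncSet"
begin

text \<open>Choose representatives x_i of a_i and y_i of b_i. The matrix (ip x_i y_j) is upper
  triangular with nonzero diagonal, so the x_i are linearly independent: in a vanishing
  combination, pairing with y_j for the largest j with nonzero coefficient leaves a single
  nonzero term. Hence c \<mapsto> \<Sum> c_i x_i embeds F_q^n into F_q^(t+1), so q^n \<le> q^(t+1)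
  and n \<le> t + 1 < t + 2.\<close>

lemma ip_scale: "ip t (\<lambda>i. c * u i) (\<lambda>i. d * v i) = c * d * ip t u v"
  unfolding ip_def by (simp add: sum_distrib_left algebra_simps)

lemma ip_sum_left: "ip t (\<lambda>k. \<Sum>i\<in>A. e i * x i k) y = (\<Sum>i\<in>A. e i * ip t (x i) y)"
  unfolding ip_def
  by (simp add: sum_distrib_left sum_distrib_right algebra_simps sum.swap[of _ A])

lemma G_adj_proj_class_iff: "G_adj t (proj_class t u) (proj_class t v) \<longleftrightarrow> ip t u v = 0"
proof
  assume "G_adj t (proj_class t u) (proj_class t v)"
  then obtain c d where "c \<noteq> 0" "d \<noteq> 0" "ip t (\<lambda>i. c * u i) (\<lambda>i. d * v i) = 0"
    unfolding G_adj_def proj_class_def by blast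
  then show "ip t u v = 0" by (simp add: ip_scale)
next
  assume "ip t u v = 0"
  moreover have "u \<in> proj_class t u" "v \<in> proj_class t v"
    unfolding proj_class_def by (auto intro!: exI[of _ 1])
  ultimately show "G_adj t (proj_class t u) (proj_class t v)"
    unfolding G_adj_def by blast
qed

lemma PG_obtain_representatives:
  assumes "\<forall>i\<in>I. a i \<in> PG t"
  obtains x where "\<forall>i\<in>I. a i = proj_class t (x i)"
proof -
  have "\<forall>i\<in>I. \<exists>u. a i = proj_class t u" using assms unfolding PG_def by blast
  then show ?thesis using that by metis
qed

lemma triangular_combination_zero:
  fixes x y :: "nat \<Rightarrow> nat \<Rightarrow> 'a::field"
  assumes upper: "\<And>i j. 1 \<le> i \<Longrightarrow> i < j \<Longrightarrow> j \<le> n \<Longrightarrow> ip t (x i) (y j) = 0"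
    and diag: "\<And>i. i \<in> {1..n} \<Longrightarrow> ip t (x i) (y i) \<noteq> 0"
    and comb: "\<And>k. k \<le> t \<Longrightarrow> (\<Sum>i\<in>{1..n}. e i * x i k) = 0"
  shows "\<forall>i\<in>{1..n}. e i = 0"
proof (rule ccontr)
  define S where "S = {i\<in>{1..n}. e i \<noteq> 0}"
  assume "\<not> (\<forall>i\<in>{1..n}. e i = 0)"
  then have "finite S" "S \<noteq> {}" unfolding S_def by auto
  define j where "j = Max S"
  have "j \<in> S" using \<open>finite S\<close> \<open>S \<noteq> {}\<close> unfolding j_def by (rule Max_in)
  then have j: "j \<in> {1..n}" "e j \<noteq> 0" unfolding S_def by auto
  have above_j: "e i = 0" if "i \<in> {1..n}" "j < i" for i
    using that Max_ge[OF \<open>finite S\<close>, of i] unfolding S_def j_def by fastforce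
  have "0 = ip t (\<lambda>k. \<Sum>i\<in>{1..n}. e i * x i k) (y j)"
    unfolding ip_def using comb by simp
  also have "\<dots> = (\<Sum>i\<in>{1..n}. e i * ip t (x i) (y j))"
    by (rule ip_sum_left)
  also have "\<dots> = (\<Sum>i\<in>{j}. e i * ip t (x i) (y j))"
  proof (rule sum.mono_neutral_right)
    show "\<forall>i\<in>{1..n} - {j}. e i * ip t (x i) (y j) = 0"
    proof
      fix i assume i: "i \<in> {1..n} - {j}"
      then consider "i < j" | "j < i" by fastforce
      then show "e i * ip t (x i) (y j) = 0"
        by cases (use i j upper above_j in auto)
    qed
  qed (use j in auto)
  also have "\<dots> \<noteq> 0" using j diag by simp
  finally show False by simp
qed

lemma one_less_card_UNIV_field: "1 < card (UNIV :: 'a::{finite,field} set)"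
proof -
  have "card {0, 1::'a} \<le> card (UNIV :: 'a set)" by (rule card_mono) auto
  then show ?thesis by simp
qed

lemma triangular_system_length_le:
  fixes x y :: "nat \<Rightarrow> nat \<Rightarrow> 'a::{finite,field}"
  assumes upper: "\<And>i j. 1 \<le> i \<Longrightarrow> i < j \<Longrightarrow> j \<le> n \<Longrightarrow> ip t (x i) (y j) = 0"
    and diag: "\<And>i. i \<in> {1..n} \<Longrightarrow> ip t (x i) (y i) \<noteq> 0"
  shows "n \<le> t + 1"
proof -
  define comb where "comb c = restrict (\<lambda>k. \<Sum>i\<in>{1..n}. c i * x i k) {..t}" for c
  let ?coeffs = "PiE {1..n} (\<lambda>_. UNIV :: 'a set)"
  let ?vectors = "PiE {..t} (\<lambda>_. UNIV :: 'a set)"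
  have "inj_on comb ?coeffs"
  proof (rule inj_onI)
    fix c d assume c: "c \<in> ?coeffs" and d: "d \<in> ?coeffs" and "comb c = comb d"
    have "(\<Sum>i\<in>{1..n}. (c i - d i) * x i k) = 0" if "k \<le> t" for k
      using fun_cong[OF \<open>comb c = comb d\<close>, of k] that
      by (simp add: comb_def left_diff_distrib sum_subtractf)
    then have "\<forall>i\<in>{1..n}. c i = d i"
      using triangular_combination_zero[where e = "\<lambda>i. c i - d i", OF upper diag] by auto
    then show "c = d" using c d by (metis PiE_ext)
  qed
  moreover have "comb ` ?coeffs \<subseteq> ?vectors" unfolding comb_def by (auto split: if_splits)
  ultimately have "card ?coeffs \<le> card ?vectors"
    by (intro card_inj_on_le) (auto simp: finite_PiE)
  then have "card (UNIV :: 'a set) ^ n \<le> card (UNIV :: 'a set) ^ (t + 1)"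
    by (simp add: card_PiE)
  then show ?thesis using one_less_card_UNIV_field power_le_imp_le_exp by blast
qed

lemma G_triangular_length_le:
  fixes a b :: "nat \<Rightarrow> (nat \<Rightarrow> 'a::{finite,field}) set"
  assumes "\<forall>i\<in>{1..n}. a i \<in> PG t \<and> b i \<in> PG t"
    and adj: "\<forall>i j. 1 \<le> i \<and> i < j \<and> j \<le> n \<longrightarrow> G_adj t (a i) (b j)"
    and nonadj: "\<forall>i\<in>{1..n}. \<not> G_adj t (a i) (b i)"
  shows "n \<le> t + 1"
proof -
  obtain x where x: "\<forall>i\<in>{1..n}. a i = proj_class t (x i)"
    using assms(1) PG_obtain_representatives by (metis (no_types, lifting))
  obtain y where y: "\<forall>i\<in>{1..n}. b i = proj_class t (y i)"
    using assms(1) PG_obtain_representatives by (metis (no_types, lifting))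
  show ?thesis
  proof (rule triangular_system_length_le)
    fix i j assume ij: "1 \<le> i" "i < j" "j \<le> n"
    then have "i \<in> {1..n}" "j \<in> {1..n}" by auto
    then show "ip t (x i) (y j) = 0"
      using adj ij x y G_adj_proj_class_iff by metis
  next
    fix i assume "i \<in> {1..n}"
    then show "ip t (x i) (y i) \<noteq> 0"
      using nonadj x y G_adj_proj_class_iff by metis
  qed
qed

theorem lemma2p2:
  fixes t :: nat
  assumes "t \<ge> 2"
  shows "\<not> (\<exists>(a :: nat \<Rightarrow> (nat \<Rightarrow> 'a::{finite,field}) set) b.
            (\<forall>i\<in>{1..t+2}. a i \<in> PG t \<and> b i \<in> PG t) \<and>
            (\<forall>i j. 1 \<le> i \<and> i < j \<and> j \<le> t + 2 \<longrightarrow> G_adj t (a i) (b j)) \<and>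
            (\<forall>i\<in>{1..t+2}. \<not> G_adj t (a i) (b i)))"
proof (intro notI, elim exE conjE)
  fix a b :: "nat \<Rightarrow> (nat \<Rightarrow> 'a) set"
  assume "\<forall>i\<in>{1..t+2}. a i \<in> PG t \<and> b i \<in> PG t"
    and "\<forall>i j. 1 \<le> i \<and> i < j \<and> j \<le> t + 2 \<longrightarrow> G_adj t (a i) (b j)"
    and "\<forall>i\<in>{1..t+2}. \<not> G_adj t (a i) (b i)"
  from G_triangular_length_le[OF this] show False by simp
qed

end
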